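(* Let $A,G$ be $n\times n$ symmetric matrices with $G\succeq A\succ0$. Then for any $u\in\mathbb{R}^n\setminus\{0\}$, $$V(A,G)-V(A,\mathrm{SR1}(A,G,u))=\ln\left(1+\nu^2(A,G,u)\right).$$
   Context: $V(A,G)=\ln\det(GA^{-1})$. $\nu(A,G,u)=\left(\frac{u^\top(G-A)G^{-1}(G-A)u}{u^\top(A-AG^{-1}A)u}\right)^{1/2}$ for $G\succeq A$, with the convention (used in the paper) that $\nu(A,G,u)=0$ when $(G-A)u=0$. $\mathrm{SR1}(A,G,u)=G$ if $(G-A)u=0$, and otherwise $\mathrm{SR1}(A,G,u)=G-\frac{(G-A)uu^\top(G-A)}{u^\top(G-A)u}$. *)

theory Defs
  imports "HOL-Analysis.Analysis"
begin

definition psd :: "real^'n^'n \<Rightarrow> bool" where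
  "psd M \<longleftrightarrow> (\<forall>x. 0 \<le> x \<bullet> (M *v x))"

definition pd :: "real^'n^'n \<Rightarrow> bool" where
  "pd M \<longleftrightarrow> (\<forall>x. x \<noteq> 0 \<longrightarrow> 0 < x \<bullet> (M *v x))"

definition symm :: "real^'n^'n \<Rightarrow> bool" where
  "symm M \<longleftrightarrow> transpose M = M"

definition Vf :: "real^'n^'n \<Rightarrow> real^'n^'n \<Rightarrow> real" where
  "Vf A G = ln (det (G ** matrix_inv A))"

definition nu :: "real^'n^'n \<Rightarrow> real^'n^'n \<Rightarrow> real^'n \<Rightarrow> real" where
  "nu A G u = (if (G - A) *v u = 0 then 0 else
     sqrt ((u \<bullet> ((G - A) ** matrix_inv G ** (G - A) *v u)) /
           (u \<bullet> ((A - A ** matrix_inv G ** A) *v u))))"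

definition SR1 :: "real^'n^'n \<Rightarrow> real^'n^'n \<Rightarrow> real^'n \<Rightarrow> real^'n^'n" where
  "SR1 A G u = (if (G - A) *v u = 0 then G else
     G - (1 / (u \<bullet> ((G - A) *v u))) *\<^sub>R
         (\<chi> i j. ((G - A) *v u) $ i * (u v* (G - A)) $ j))"

end

theory Submission
  imports Defs
begin

text \<open>Write \<open>D = G - A\<close>, \<open>w = D u\<close>, \<open>c = u\<^sup>T D u\<close> and \<open>q = w\<^sup>T G\<^sup>-\<^sup>1 w\<close>.
  The SR1 update equals \<open>G (I - c\<^sup>-\<^sup>1 G\<^sup>-\<^sup>1 w w\<^sup>T)\<close>, so by the matrix determinant lemma
  its determinant is \<open>det G \<cdot> (1 - q / c)\<close>, and \<open>V(A,G) - V(A,SR1)\<close> is \<open>ln (c / (c - q))\<close>.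
  The identity \<open>A - A G\<^sup>-\<^sup>1 A = D - D G\<^sup>-\<^sup>1 D\<close> turns the denominator of \<open>\<nu>\<^sup>2\<close> into \<open>c - q\<close>,
  so \<open>1 + \<nu>\<^sup>2 = c / (c - q)\<close> as well. All logarithms are defined because \<open>0 < q < c\<close>:
  with \<open>z = G\<^sup>-\<^sup>1 w\<close> one has \<open>q = z\<^sup>T G z\<close> and \<open>c - q = (u - z)\<^sup>T D (u - z) + z\<^sup>T A z\<close>.\<close>

definition outer :: "'a::times^'m \<Rightarrow> 'a^'n \<Rightarrow> 'a^'n^'m" where
  "outer a b = (\<chi> i j. a$i * b$j)"

lemma matrix_mul_outer:
  fixes M :: "'a::comm_semiring_1^'m^'k"
  shows "M ** outer a b = outer (M *v a) b"
  by (simp add: outer_def vec_eq_iff matrix_matrix_mult_def matrix_vector_mult_def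
      sum_distrib_right mult.assoc)

lemma det_mat1_column_update:
  fixes x :: "'a::field^'n"
  shows "det (\<chi> i j. if j = k then x$i else (mat 1 :: 'a^'n^'n)$i$j) = x$k"
  using cramer_lemma[of k "mat 1 :: 'a^'n^'n" x] unfolding matrix_vector_mul_lid det_I by simp

lemma sum_scale_rows_mat1:
  fixes x :: "'a::semiring_1^'n"
  shows "(\<Sum>i\<in>UNIV. x$i *s row i (mat 1 :: 'a^'n^'n)) = x"
  by (simp add: vec_eq_iff row_def mat_def sum_component if_distrib cong: if_cong)

lemma det_mat1_row_update:
  fixes x :: "'a::field^'n"
  shows "det (\<chi> i. if i = k then x else row i (mat 1 :: 'a^'n^'n)) = x$k"
  using cramer_lemma_transpose[of k x "mat 1 :: 'a^'n^'n"]
  unfolding sum_scale_rows_mat1 det_I by simp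

lemma mat1_add_outer_row_update_factor:
  fixes a b :: "'a::comm_semiring_1^'n"
  shows "(\<chi> i. if i = k then b else row i (mat 1) + a$i *s b) =
    (\<chi> i j. if j = k then (\<chi> i. if i = k then 1 else a$i)$i else (mat 1 :: 'a^'n^'n)$i$j) **
    (\<chi> i. if i = k then b else row i (mat 1 :: 'a^'n^'n))"
    (is "_ = ?L ** ?P")
proof -
  have "(?L ** ?P)$i$j = (if i = k then b$j else (row i (mat 1) + a$i *s b)$j)" for i j
  proof -
    have "(?L ** ?P)$i$j =
        (\<Sum>l\<in>UNIV. (if l = k then (if i = k then 1 else a$i) * ?P$l$j else 0)
          + (if l = i \<and> i \<noteq> k then ?P$l$j else 0))"
      unfolding matrix_matrix_mult_def vec_lambda_beta
      by (intro sum.cong) (auto simp: mat_def)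
    then show ?thesis
      by (simp add: sum.distrib row_def mat_def ac_simps)
  qed
  then show ?thesis
    by (simp add: vec_eq_iff)
qed

lemma det_mat1_add_outer:
  fixes a b :: "'a::field^'n"
  shows "det (mat 1 + outer a b) = 1 + (\<Sum>i\<in>UNIV. a$i * b$i)"
proof (cases "b = 0")
  case True
  then have "outer a b = 0"
    by (simp add: outer_def vec_eq_iff)
  with True show ?thesis
    by simp
next
  case False
  then obtain k where bk: "b$k \<noteq> 0" by (auto simp: vec_eq_iff)
  \<comment> \<open>Replacing row \<open>k\<close> of \<open>M\<close> by \<open>\<Sum>i. b\<^sub>i row\<^sub>i M = (1 + s) b\<close> scales \<open>det M\<close> by \<open>b\<^sub>k\<close>;
    with row \<open>b\<close> instead, the matrix factors into a column and a row update of \<open>mat 1\<close>.\<close>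
  define M where "M = mat 1 + outer a b"
  define s where "s = (\<Sum>i\<in>UNIV. a$i * b$i)"
  have row_M: "row i M = row i (mat 1) + a$i *s b" for i
    by (simp add: M_def outer_def vec_eq_iff row_def)
  have sum_rows: "(\<Sum>i\<in>UNIV. b$i *s row i M) = (1 + s) *s b"
    by (simp add: row_M vector_add_ldistrib vector_smult_assoc sum.distrib sum_scale_rows_mat1
        vector_sadd_rdistrib s_def mult.commute flip: vec.scale_sum_left)
  have "b$k * det M = det (\<chi> i. if i = k then (1 + s) *s b else row i M)"
    using cramer_lemma_transpose[of k b M] unfolding sum_rows by (rule sym)
  also have "\<dots> = (1 + s) * det (\<chi> i. if i = k then b else row i M)"
    by (rule det_row_mul)
  also have "(\<chi> i. if i = k then b else row i M) =
      (\<chi> i j. if j = k then (\<chi> i. if i = k then 1 else a$i)$i else (mat 1 :: 'a^'n^'n)$i$j) **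
      (\<chi> i. if i = k then b else row i (mat 1 :: 'a^'n^'n))"
    unfolding row_M by (rule mat1_add_outer_row_update_factor)
  finally have "b$k * det M = (1 + s) * b$k"
    by (simp only: det_mul det_mat1_column_update det_mat1_row_update) simp
  then show ?thesis
    using bk by (simp add: M_def s_def)
qed

lemma symm_vector_matrix_mult:
  assumes "symm M"
  shows "x v* M = M *v x"
  using assms by (simp add: symm_def flip: transpose_matrix_vector)

lemma symm_inner:
  assumes "symm M"
  shows "x \<bullet> (M *v y) = (M *v x) \<bullet> y"
  by (metis assms dot_lmul_matrix symm_vector_matrix_mult)

lemma symm_diff:
  assumes "symm A" and "symm B"
  shows "symm (A - B)"
  using assms by (simp add: symm_def transpose_def vec_eq_iff)

lemma pd_add_psd:
  assumes "pd A" and "psd B"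
  shows "pd (A + B)"
  using assms unfolding pd_def psd_def
  by (simp add: matrix_vector_mult_add_rdistrib inner_add_right add_pos_nonneg)

lemma pd_imp_invertible:
  assumes "pd M"
  shows "invertible M"
proof -
  have "M *v x = 0 \<Longrightarrow> x = 0" for x
    using assms unfolding pd_def by (metis inner_zero_right less_irrefl)
  then show ?thesis
    using invertible_left_inverse matrix_left_invertible_ker by blast
qed

lemma matrix_inv_right:
  assumes "invertible M"
  shows "M ** matrix_inv M = mat 1"
  using someI_ex[OF assms[unfolded invertible_def]] by (simp add: matrix_inv_def)

lemma matrix_inv_left:
  assumes "invertible M"
  shows "matrix_inv M ** M = mat 1"
  using someI_ex[OF assms[unfolded invertible_def]] by (simp add: matrix_inv_def)

lemma det_matrix_inv:
  fixes M :: "'a::field^'n^'n"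
  assumes "invertible M"
  shows "det (matrix_inv M) = inverse (det M)"
  using arg_cong[OF matrix_inv_right[OF assms], of det] invertible_det_nz[of M] assms
  by (simp add: det_mul field_simps)

text \<open>The segment from \<open>mat 1\<close> to \<open>M\<close> stays positive definite, hence invertible, so by
  continuity the determinant cannot change sign along it.\<close>

lemma pd_det_pos:
  assumes "pd M"
  shows "0 < det M"
proof (rule ccontr)
  assume "\<not> 0 < det M"
  define f where "f t = det (mat 1 + t *\<^sub>R (M - mat 1))" for t :: real
  have pd_segment: "pd (mat 1 + t *\<^sub>R (M - mat 1))" if "0 \<le> t" "t \<le> 1" for t
    unfolding pd_def
  proof (intro allI impI)
    fix x :: "real^'a"
    assume "x \<noteq> 0"
    then have "0 < x \<bullet> x" and "0 < x \<bullet> (M *v x)"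
      using assms by (auto simp: pd_def)
    moreover have "x \<bullet> ((mat 1 + t *\<^sub>R (M - mat 1)) *v x) = (1 - t) * (x \<bullet> x) + t * (x \<bullet> (M *v x))"
      by (simp add: algebra_simps matrix_vector_mult_add_rdistrib matrix_vector_mult_diff_rdistrib
          inner_diff_right flip: scaleR_matrix_vector_assoc)
    ultimately show "0 < x \<bullet> ((mat 1 + t *\<^sub>R (M - mat 1)) *v x)"
      using that by (smt (verit) mult_nonneg_nonneg mult_pos_pos)
  qed
  have "continuous_on {0..1} f"
    unfolding f_def det_def by (intro continuous_intros)
  moreover have "f 1 \<le> 0" and "0 \<le> f 0"
    using \<open>\<not> 0 < det M\<close> by (simp_all add: f_def)
  ultimately obtain t where "0 \<le> t" "t \<le> 1" "f t = 0"
    using IVT2' by (metis zero_le_one)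
  then show False
    using pd_imp_invertible[OF pd_segment] by (simp add: f_def invertible_det_nz)
qed

lemma matrix_diff_ldistrib:
  fixes A :: "'a::ring_1^'n^'m"
  shows "A ** (B - C) = A ** B - A ** C"
  by (simp add: matrix_matrix_mult_def vec_eq_iff sum_subtractf algebra_simps)

lemma matrix_diff_rdistrib:
  fixes A :: "'a::ring_1^'n^'m"
  shows "(A - B) ** C = A ** C - B ** C"
  by (simp add: matrix_matrix_mult_def vec_eq_iff sum_subtractf algebra_simps)

lemma sandwich_inverse_complement:
  fixes A G Gi :: "'a::comm_ring_1^'n^'n"
  assumes "G ** Gi = mat 1" and "Gi ** G = mat 1"
  shows "A - A ** Gi ** A = (G - A) - (G - A) ** Gi ** (G - A)"
proof -
  have "G ** (Gi ** A) = A"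
    by (metis assms(1) matrix_mul_assoc matrix_mul_lid)
  then show ?thesis
    using assms(2)
    by (simp add: matrix_diff_ldistrib matrix_diff_rdistrib algebra_simps flip: matrix_mul_assoc)
qed

lemma det_SR1:
  assumes "invertible G" and "symm (G - A)"
  shows "det (SR1 A G u) =
    det G * (1 - u \<bullet> ((G - A) ** matrix_inv G ** (G - A) *v u) / (u \<bullet> ((G - A) *v u)))"
proof (cases "(G - A) *v u = 0")
  case True
  then show ?thesis
    by (simp add: SR1_def flip: matrix_vector_mul_assoc)
next
  case False
  define w where "w = (G - A) *v u"
  define c where "c = u \<bullet> w"
  define z where "z = matrix_inv G *v w"
  have Gz: "G *v z = w"
    by (simp add: z_def matrix_vector_mul_assoc matrix_inv_right[OF assms(1)])
  have "SR1 A G u = G - (1 / c) *\<^sub>R outer w w"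
    using False by (simp add: SR1_def outer_def symm_vector_matrix_mult[OF assms(2)] w_def c_def)
  also have "\<dots> = G + outer (G *v (- (1 / c) *\<^sub>R z)) w"
    unfolding matrix_vector_mult_scaleR Gz by (simp add: outer_def vec_eq_iff)
  also have "\<dots> = G ** (mat 1 + outer (- (1 / c) *\<^sub>R z) w)"
    by (simp add: matrix_add_ldistrib matrix_mul_outer)
  finally have "det (SR1 A G u) = det G * (1 - (z \<bullet> w) / c)"
    by (simp add: det_mul det_mat1_add_outer inner_vec_def sum_negf sum_divide_distrib)
  moreover have "u \<bullet> ((G - A) ** matrix_inv G ** (G - A) *v u) = z \<bullet> w"
    using symm_inner[OF assms(2), of u z]
    by (simp add: z_def w_def inner_commute flip: matrix_vector_mul_assoc)
  ultimately show ?thesis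
    by (simp add: c_def w_def)
qed

lemma sandwich_form_bounds:
  assumes "symm A" and "symm G" and "pd A" and "psd (G - A)" and "(G - A) *v u \<noteq> 0"
  shows "0 < u \<bullet> ((G - A) ** matrix_inv G ** (G - A) *v u)"
    and "u \<bullet> ((G - A) ** matrix_inv G ** (G - A) *v u) < u \<bullet> ((G - A) *v u)"
proof -
  define D where "D = G - A"
  define z where "z = matrix_inv G *v (D *v u)"
  have "pd G"
    using pd_add_psd[OF assms(3,4)] by simp
  have Gz: "G *v z = D *v u"
    using matrix_inv_right[OF pd_imp_invertible[OF \<open>pd G\<close>]]
    by (simp add: z_def matrix_vector_mul_assoc matrix_mul_assoc)
  then have "z \<noteq> 0"
    using assms(5) by (auto simp: D_def)
  have symm_D: "symm D"
    using symm_diff[OF assms(2,1)] by (simp add: D_def)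
  have q_eq: "u \<bullet> (D ** matrix_inv G ** D *v u) = z \<bullet> (G *v z)"
    using symm_inner[OF symm_D, of u z]
    by (simp add: Gz inner_commute flip: matrix_vector_mul_assoc z_def)
  have "u \<bullet> (D *v u) - z \<bullet> (G *v z) = (u - z) \<bullet> (D *v (u - z)) + z \<bullet> (A *v z)"
  proof -
    have "z \<bullet> (G *v z) = u \<bullet> (D *v z)" and "z \<bullet> (D *v u) = u \<bullet> (D *v z)"
      using symm_inner[OF symm_D, of u z] by (simp_all add: Gz inner_commute)
    moreover have "A = G - D"
      by (simp add: D_def)
    ultimately show ?thesis
      by (simp add: matrix_vector_mult_diff_distrib matrix_vector_mult_diff_rdistrib
          inner_diff_left inner_diff_right)
  qed
  moreover have "0 \<le> (u - z) \<bullet> (D *v (u - z))" and "0 < z \<bullet> (A *v z)" and "0 < z \<bullet> (G *v z)"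
    using assms(3,4) \<open>pd G\<close> \<open>z \<noteq> 0\<close> by (simp_all add: D_def psd_def pd_def)
  ultimately show "0 < u \<bullet> ((G - A) ** matrix_inv G ** (G - A) *v u)"
    and "u \<bullet> ((G - A) ** matrix_inv G ** (G - A) *v u) < u \<bullet> ((G - A) *v u)"
    unfolding D_def[symmetric] q_eq by linarith+
qed

lemma nu_squared:
  fixes A G :: "real^'n^'n" and u :: "real^'n"
  defines "q \<equiv> u \<bullet> ((G - A) ** matrix_inv G ** (G - A) *v u)"
    and "c \<equiv> u \<bullet> ((G - A) *v u)"
  assumes "invertible G" and "(G - A) *v u \<noteq> 0" and "0 \<le> q" and "q < c"
  shows "(nu A G u)\<^sup>2 = q / (c - q)"
proof -
  have "u \<bullet> ((A - A ** matrix_inv G ** A) *v u) = c - q"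
    unfolding sandwich_inverse_complement[OF matrix_inv_right[OF assms(3)] matrix_inv_left[OF assms(3)], of A]
    by (simp only: c_def q_def matrix_vector_mult_diff_rdistrib inner_diff_right)
  then have "nu A G u = sqrt (q / (c - q))"
    using assms(4) unfolding nu_def q_def[symmetric] by simp
  with assms(5,6) show ?thesis
    by simp
qed

lemma Vf_diff:
  assumes "0 < det A" and "0 < det G" and "0 < det H"
  shows "Vf A G - Vf A H = ln (det G / det H)"
proof -
  have "det (matrix_inv A) = inverse (det A)"
    using assms(1) by (simp add: det_matrix_inv invertible_det_nz)
  with assms show ?thesis
    by (simp add: Vf_def det_mul ln_mult ln_div ln_inverse)
qed

theorem lemma4:
  fixes A G :: "real^'n^'n" and u :: "real^'n"
  assumes "symm A" and "symm G"
    and "pd A" and "psd (G - A)"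
    and "u \<noteq> 0"
  shows "Vf A G - Vf A (SR1 A G u) = ln (1 + (nu A G u)^2)"
proof (cases "(G - A) *v u = 0")
  case True
  then show ?thesis
    by (simp add: SR1_def nu_def)
next
  case False
  define q where "q = u \<bullet> ((G - A) ** matrix_inv G ** (G - A) *v u)"
  define c where "c = u \<bullet> ((G - A) *v u)"
  have "0 < q" and "q < c"
    using sandwich_form_bounds[OF assms(1-4) False] by (simp_all add: q_def c_def)
  have "pd G"
    using pd_add_psd[OF assms(3,4)] by simp
  then have "invertible G" and "0 < det G"
    by (simp_all add: pd_imp_invertible pd_det_pos)
  have det_SR1_eq: "det (SR1 A G u) = det G * ((c - q) / c)"
    using det_SR1[OF \<open>invertible G\<close> symm_diff[OF assms(2,1)], of u] \<open>0 < q\<close> \<open>q < c\<close>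
    unfolding q_def[symmetric] c_def[symmetric] by (simp add: diff_divide_distrib)
  then have "0 < det (SR1 A G u)"
    using \<open>0 < det G\<close> \<open>0 < q\<close> \<open>q < c\<close> by simp
  then have "Vf A G - Vf A (SR1 A G u) = ln (det G / det (SR1 A G u))"
    using Vf_diff pd_det_pos[OF assms(3)] \<open>0 < det G\<close> by blast
  also have "\<dots> = ln (1 + q / (c - q))"
    using \<open>0 < det G\<close> \<open>0 < q\<close> \<open>q < c\<close> by (simp add: det_SR1_eq field_simps)
  also have "q / (c - q) = (nu A G u)\<^sup>2"
    using nu_squared[OF \<open>invertible G\<close> False] \<open>0 < q\<close> \<open>q < c\<close>
    by (simp add: q_def c_def)
  finally show ?thesis .
qed

end
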